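(* Let $t$ be a positive integer. Fix complex numbers $\alpha,\beta$ with $\alpha^4=1+i\sqrt t$ and $\beta^4=-1+i\sqrt t$, and put $\gamma=\alpha\beta$ (so $\gamma^4=-t-1$). For integers $x,y$ let $\xi(x,y)=\sqrt2\,\alpha\,(x-i\sqrt t\,y)$ and $\eta(x,y)=\sqrt2\,\beta\,(x+i\sqrt t\,y)$. If $(x_1,y_1)$ and $(x_2,y_2)$ are two pairs of rational integers, then $$\frac{\xi(x_1,y_1)\,\eta(x_2,y_2)}{\gamma},\qquad \xi(x_1,y_1)^3\,\xi(x_2,y_2),\qquad \eta(x_1,y_1)^3\,\eta(x_2,y_2)$$ are algebraic integers lying in $\mathbb{Q}(\sqrt{-t})$.
   Context: $\sqrt{-t}=i\sqrt t$. The quantity $\gamma$ plays the role of the fourth root $(-t-1)^{1/4}$ chosen compatibly with $\alpha,\beta$. *)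

theory Defs
  imports Complex_Main "HOL-Computational_Algebra.Polynomial"
begin

definition in_Q_sqrt_neg :: "nat \<Rightarrow> complex \<Rightarrow> bool" where
  "in_Q_sqrt_neg t z \<longleftrightarrow>
     (\<exists>a b :: rat. z = of_rat a + of_rat b * \<i> * complex_of_real (sqrt (real t)))"

definition xi :: "nat \<Rightarrow> complex \<Rightarrow> int \<Rightarrow> int \<Rightarrow> complex" where
  "xi t \<alpha> x y = complex_of_real (sqrt 2) * \<alpha> *
     (of_int x - \<i> * complex_of_real (sqrt (real t)) * of_int y)"

definition eta :: "nat \<Rightarrow> complex \<Rightarrow> int \<Rightarrow> int \<Rightarrow> complex" where
  "eta t \<beta> x y = complex_of_real (sqrt 2) * \<beta> *
     (of_int x + \<i> * complex_of_real (sqrt (real t)) * of_int y)"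

end

theory Submission
  imports Defs
begin

text \<open>The factors \<open>\<surd>2\<close> occur only squared, and \<open>\<alpha>\<close>, \<open>\<beta>\<close> occur either as \<open>\<alpha>\<beta> = \<gamma>\<close>, which
  cancels, or as \<open>\<alpha>\<^sup>4 = 1 + \<surd>-t\<close>, \<open>\<beta>\<^sup>4 = -1 + \<surd>-t\<close>. Hence all three numbers lie in the
  ring \<open>\<int>[\<surd>-t]\<close>, whose elements \<open>a + b\<surd>-t\<close> are roots of the monic integer polynomial
  \<open>X\<^sup>2 - 2aX + a\<^sup>2 + tb\<^sup>2\<close>.\<close>

definition int_adjoin :: "'a::comm_ring_1 \<Rightarrow> 'a set" where
  "int_adjoin w = {of_int a + of_int b * w | a b. True}"

lemma int_adjoin_of_int [intro]: "of_int a \<in> int_adjoin w"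
  unfolding int_adjoin_def by (rule CollectI, rule exI[of _ a], rule exI[of _ 0]) simp

lemma int_adjoin_numeral [intro]: "numeral n \<in> int_adjoin w"
  using int_adjoin_of_int[of "numeral n" w] by simp

lemma int_adjoin_one [intro]: "1 \<in> int_adjoin w"
  using int_adjoin_of_int[of 1 w] by simp

lemma int_adjoin_generator [intro]: "w \<in> int_adjoin w"
  unfolding int_adjoin_def by (rule CollectI, rule exI[of _ 0], rule exI[of _ 1]) simp

lemma int_adjoin_add [intro]:
  assumes "z \<in> int_adjoin w" "u \<in> int_adjoin w"
  shows "z + u \<in> int_adjoin w"
proof -
  obtain a b c d where "z = of_int a + of_int b * w" "u = of_int c + of_int d * w"
    using assms unfolding int_adjoin_def by blast
  then have "z + u = of_int (a + c) + of_int (b + d) * w"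
    by (simp add: algebra_simps)
  then show ?thesis unfolding int_adjoin_def by blast
qed

lemma int_adjoin_mult [intro]:
  assumes "w * w = of_int d" "z \<in> int_adjoin w" "u \<in> int_adjoin w"
  shows "z * u \<in> int_adjoin w"
proof -
  obtain a b a' b' where "z = of_int a + of_int b * w" "u = of_int a' + of_int b' * w"
    using assms(2,3) unfolding int_adjoin_def by blast
  then have "z * u = of_int a * of_int a' + of_int b * of_int b' * (w * w)
      + of_int (a * b' + b * a') * w"
    by (simp add: algebra_simps)
  also have "\<dots> = of_int (a * a' + d * b * b') + of_int (a * b' + b * a') * w"
    by (simp add: assms(1) algebra_simps)
  finally show ?thesis unfolding int_adjoin_def by blast
qed

lemma int_adjoin_minus [intro]:
  assumes "z \<in> int_adjoin w"
  shows "- z \<in> int_adjoin w"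
proof -
  obtain a b where "z = of_int a + of_int b * w"
    using assms unfolding int_adjoin_def by blast
  then have "- z = of_int (- a) + of_int (- b) * w"
    by simp
  then show ?thesis unfolding int_adjoin_def by blast
qed

lemma int_adjoin_diff [intro]:
  "z \<in> int_adjoin w \<Longrightarrow> u \<in> int_adjoin w \<Longrightarrow> z - u \<in> int_adjoin w"
  using int_adjoin_add[of z w "- u"] int_adjoin_minus[of u w] by simp

lemma int_adjoin_power [intro]:
  assumes "w * w = of_int d" "z \<in> int_adjoin w"
  shows "z ^ n \<in> int_adjoin w"
  using assms by (induction n) auto

lemma algebraic_int_int_adjoin:
  fixes w :: "'a::field"
  assumes "w * w = of_int d" "z \<in> int_adjoin w"
  shows "algebraic_int z"
proof -
  obtain a b where z: "z = of_int a + of_int b * w"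
    using assms(2) unfolding int_adjoin_def by blast
  let ?p = "[:of_int (a\<^sup>2 - d * b\<^sup>2), of_int (-2 * a), 1:] :: 'a poly"
  show ?thesis
  proof
    have "poly ?p z = of_int (a\<^sup>2 - d * b\<^sup>2) - of_int a * of_int a + of_int b * of_int b * (w * w)"
      by (simp add: z algebra_simps)
    then show "poly ?p z = 0"
      by (simp add: assms(1) power2_eq_square)
    show "lead_coeff ?p = 1" by simp
    show "\<forall>i. coeff ?p i \<in> \<int>" by (auto simp: coeff_pCons split: nat.splits)
  qed
qed

abbreviation sqrt_neg :: "nat \<Rightarrow> complex" where
  "sqrt_neg t \<equiv> \<i> * complex_of_real (sqrt (real t))"

lemma sqrt_neg_mult_self: "sqrt_neg t * sqrt_neg t = of_int (- int t)"
proof -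
  have "complex_of_real (sqrt (real t)) * complex_of_real (sqrt (real t)) = of_nat t"
    by (simp flip: of_real_mult)
  then show ?thesis by (simp add: algebra_simps)
qed

lemma in_Q_sqrt_neg_if_int_adjoin:
  assumes "z \<in> int_adjoin (sqrt_neg t)"
  shows "in_Q_sqrt_neg t z"
proof -
  obtain a b :: int where "z = of_int a + of_int b * sqrt_neg t"
    using assms unfolding int_adjoin_def by blast
  then show ?thesis unfolding in_Q_sqrt_neg_def
    by (intro exI[of _ "of_int a"] exI[of _ "of_int b"]) (simp add: mult.assoc)
qed

lemma sqrt2_mult_self: "complex_of_real (sqrt 2) * complex_of_real (sqrt 2) = 2"
  by (simp flip: of_real_mult)

lemma xi_mult_eta_div:
  assumes "\<alpha> \<noteq> 0" "\<beta> \<noteq> 0"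
  shows "xi t \<alpha> x1 y1 * eta t \<beta> x2 y2 / (\<alpha> * \<beta>) =
    2 * ((of_int x1 - sqrt_neg t * of_int y1) * (of_int x2 + sqrt_neg t * of_int y2))"
  using assms unfolding xi_def eta_def
  by (simp add: field_simps flip: sqrt2_mult_self)

lemma xi_cube_mult_xi:
  "xi t \<alpha> x1 y1 ^ 3 * xi t \<alpha> x2 y2 =
    4 * \<alpha> ^ 4 * ((of_int x1 - sqrt_neg t * of_int y1) ^ 3 * (of_int x2 - sqrt_neg t * of_int y2))"
  unfolding xi_def
  by (simp add: eval_nat_numeral mult_ac) (simp add: mult.assoc[symmetric] sqrt2_mult_self)

lemma eta_cube_mult_eta:
  "eta t \<beta> x1 y1 ^ 3 * eta t \<beta> x2 y2 =
    4 * \<beta> ^ 4 * ((of_int x1 + sqrt_neg t * of_int y1) ^ 3 * (of_int x2 + sqrt_neg t * of_int y2))"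
  unfolding eta_def
  by (simp add: eval_nat_numeral mult_ac) (simp add: mult.assoc[symmetric] sqrt2_mult_self)

theorem lemma3p3:
  fixes t :: nat and \<alpha> \<beta> \<gamma> :: complex and x1 y1 x2 y2 :: int
  assumes "t > 0"
    and "\<alpha> ^ 4 = 1 + \<i> * complex_of_real (sqrt (real t))"
    and "\<beta> ^ 4 = -1 + \<i> * complex_of_real (sqrt (real t))"
    and "\<gamma> = \<alpha> * \<beta>"
  shows "algebraic_int (xi t \<alpha> x1 y1 * eta t \<beta> x2 y2 / \<gamma>) \<and>
           in_Q_sqrt_neg t (xi t \<alpha> x1 y1 * eta t \<beta> x2 y2 / \<gamma>) \<and>
         algebraic_int (xi t \<alpha> x1 y1 ^ 3 * xi t \<alpha> x2 y2) \<and>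
           in_Q_sqrt_neg t (xi t \<alpha> x1 y1 ^ 3 * xi t \<alpha> x2 y2) \<and>
         algebraic_int (eta t \<beta> x1 y1 ^ 3 * eta t \<beta> x2 y2) \<and>
           in_Q_sqrt_neg t (eta t \<beta> x1 y1 ^ 3 * eta t \<beta> x2 y2)"
proof -
  note sq = sqrt_neg_mult_self[of t]
  have "\<alpha> \<noteq> 0" "\<beta> \<noteq> 0"
    using assms(2,3) by (auto simp: complex_eq_iff)
  then have "xi t \<alpha> x1 y1 * eta t \<beta> x2 y2 / \<gamma> \<in> int_adjoin (sqrt_neg t)"
    unfolding assms(4) using sq by (subst xi_mult_eta_div) blast+
  moreover have "xi t \<alpha> x1 y1 ^ 3 * xi t \<alpha> x2 y2 \<in> int_adjoin (sqrt_neg t)"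
    unfolding xi_cube_mult_xi assms(2) using sq by blast
  moreover have "eta t \<beta> x1 y1 ^ 3 * eta t \<beta> x2 y2 \<in> int_adjoin (sqrt_neg t)"
    unfolding eta_cube_mult_eta assms(3) using sq by blast
  ultimately show ?thesis
    using algebraic_int_int_adjoin[OF sq] in_Q_sqrt_neg_if_int_adjoin by blast
qed

end
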